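(* Let $Z_0>0$, let $\mathbf Z_{AA}\in\mathbb C^{M\times M}$ be complex symmetric with $\mathbf R:=\operatorname{Re}\{\mathbf Z_{AA}\}$ positive definite, and let $\mathbf Z_A\in\mathbb C^{M\times M}$ be diagonal with $\mathbf Z_A$ and $\mathbf Z_A+Z_0\mathbf I_M$ invertible. Set $\boldsymbol\Gamma_A=(\mathbf Z_A+Z_0\mathbf I_M)^{-1}(\mathbf Z_A-Z_0\mathbf I_M)$, $\tilde{\boldsymbol\Gamma}_A=\boldsymbol\Gamma_A+\mathbf I_M$, and $\mathbf Z_A^D=-j\operatorname{Im}\{\mathbf Z_{AA}\}+Z_0\mathbf R^{1/2}\mathbf Z_A^{-1}\mathbf R^{1/2}$. Then $\mathbf Z_A^D+\mathbf Z_{AA}$ is invertible, and for arbitrary $\mathbf Z_{BU,k}\in\mathbb C^{1\times N}$, $\mathbf Z_{RU,k}\in\mathbb C^{1\times M}$, $\mathbf Z_{BR}\in\mathbb C^{M\times N}$, $\mathbf Z_{JU,qk}\in\mathbb C^{1\times N_J}$, $\mathbf Z_{JR,q}\in\mathbb C^{M\times N_J}$, writing $\mathbf W:=(\mathbf Z_A^D+\mathbf Z_{AA})^{-1}$: $$\tfrac{1}{2Z_0}\big(\mathbf Z_{BU,k}-\mathbf Z_{RU,k}\mathbf W\mathbf Z_{BR}\big)=\tfrac{1}{2Z_0}\big(\mathbf Z_{BU,k}-\tfrac12\tilde{\mathbf Z}_{RU,k}\tilde{\boldsymbol\Gamma}_A\tilde{\mathbf Z}_{BR}\big),$$ $$\tfrac{1}{2Z_0}\big(\mathbf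 Z_{JU,qk}-\mathbf Z_{RU,k}\mathbf W\mathbf Z_{JR,q}\big)=\tfrac{1}{2Z_0}\big(\mathbf Z_{JU,qk}-\tfrac12\tilde{\mathbf Z}_{RU,k}\tilde{\boldsymbol\Gamma}_A\tilde{\mathbf Z}_{JR,q}\big),$$ $$\tfrac{1}{2Z_0}\mathbf Z_{RU,k}\big(\mathbf I_M-\mathbf W\mathbf Z_{AA}^+\big)=\tfrac{1}{2Z_0}\big(\mathbf Z_{RU,k}-\tfrac12\tilde{\mathbf Z}_{RU,k}\tilde{\boldsymbol\Gamma}_A\bar{\mathbf Z}_{AA}\big),$$ $$\tfrac{1}{2Z_0}\big(\mathbf Z_{BR}-\mathbf Z_{AA}^+\mathbf W\mathbf Z_{BR}\big)=\tfrac{1}{2Z_0}\big(\mathbf Z_{BR}-\tfrac12\tilde{\mathbf Z}_{AA}\tilde{\boldsymbol\Gamma}_A\tilde{\mathbf Z}_{BR}\big),$$ $$\tfrac{1}{2Z_0}\big(\mathbf Z_{JR,q}-\mathbf Z_{AA}^+\mathbf W\mathbf Z_{JR,q}\big)=\tfrac{1}{2Z_0}\big(\mathbf Z_{JR,q}-\tfrac12\tilde{\mathbf Z}_{AA}\tilde{\boldsymbol\Gamma}_A\tilde{\mathbf Z}_{JR,q}\big),$$ $$\tfrac{1}{2Z_0}\big(\mathbf Z_{AA}^+-\mathbf Z_{AA}^+\mathbf W\mathbf Z_{AA}^+\big)=\tfrac{1}{2Z_0}\big(\mathbf Z_{AA}^+-\tfrac12\tilde{\mathbf Z}_{AA}\tilde{\boldsymbol\Gamma}_A\bar{\mathbf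 Z}_{AA}\big).$$ That is, replacing $\mathbf Z_A$ by $\mathbf Z_A^D$ in the $Z$-parameter channels $\mathbf H^E_{Z,k},\mathbf H^J_{Z,qk},\mathbf H^N_{Z,k},\breve{\mathbf H}^E_Z,\breve{\mathbf H}^J_{Z,q},\breve{\mathbf H}^N_Z$ yields the right-hand sides above.
   Context: $\mathbf Z_{AA}^+=\mathbf Z_{AA}+Z_0\mathbf I_M$; $\mathbf R^{1/2}$ is the symmetric positive definite square root of $\mathbf R=\operatorname{Re}\{\mathbf Z_{AA}\}$ and $\mathbf R^{-1/2}$ its inverse. Notation: $\tilde{\mathbf Z}_{RU,k}=\mathbf Z_{RU,k}\mathbf R^{-1/2}$, $\tilde{\mathbf Z}_{BR}=\mathbf R^{-1/2}\mathbf Z_{BR}$, $\tilde{\mathbf Z}_{JR,q}=\mathbf R^{-1/2}\mathbf Z_{JR,q}$, $\bar{\mathbf Z}_{AA}=\mathbf R^{-1/2}\mathbf Z_{AA}^+$, $\tilde{\mathbf Z}_{AA}=\mathbf Z_{AA}^+\mathbf R^{-1/2}$. The $Z$-parameter channels (for a load $\mathbf Z_A$) are $\mathbf H^E_{Z,k}=\frac{1}{2Z_0}(\mathbf Z_{BU,k}-\mathbf Z_{RU,k}(\mathbf Z_A+\mathbf Z_{AA})^{-1}\mathbf Z_{BR})$, $\mathbf H^J_{Z,qk}=\frac{1}{2Z_0}(\mathbf Z_{JU,qk}-\mathbf Z_{RU,k}(\mathbf Z_A+\mathbf Z_{AA})^{-1}\mathbf Z_{JR,q})$, $\mathbf H^N_{Z,k}=\frac{1}{2Z_0}\mathbf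 Z_{RU,k}(\mathbf I_M-(\mathbf Z_A+\mathbf Z_{AA})^{-1}\mathbf Z_{AA}^+)$, $\breve{\mathbf H}^E_Z=\frac{1}{2Z_0}(\mathbf Z_{BR}-\mathbf Z_{AA}^+(\mathbf Z_A+\mathbf Z_{AA})^{-1}\mathbf Z_{BR})$, $\breve{\mathbf H}^J_{Z,q}=\frac{1}{2Z_0}(\mathbf Z_{JR,q}-\mathbf Z_{AA}^+(\mathbf Z_A+\mathbf Z_{AA})^{-1}\mathbf Z_{JR,q})$, $\breve{\mathbf H}^N_Z=\frac{1}{2Z_0}(\mathbf Z_{AA}^+-\mathbf Z_{AA}^+(\mathbf Z_A+\mathbf Z_{AA})^{-1}\mathbf Z_{AA}^+)$. $\mathbf Z_A^D$ is the load impedance seen by the RIS elements when a power-matching decoupling network is inserted in front of the loads $\mathbf Z_A$. *)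

theory Defs
  imports "HOL-Analysis.Analysis"
begin

text \<open>Complex matrices are rendered as \<open>complex^'c^'r\<close> (r rows, c columns);
  the size-1 dimension of row vectors is the numeral type \<open>1\<close>.\<close>

definition cmsc :: "complex \<Rightarrow> complex^'c^'r \<Rightarrow> complex^'c^'r" where
  "cmsc c A = (\<chi> i j. c * A$i$j)"

definition cre :: "complex^'c^'r \<Rightarrow> real^'c^'r" where
  "cre A = (\<chi> i j. Re (A$i$j))"

definition cim :: "complex^'c^'r \<Rightarrow> real^'c^'r" where
  "cim A = (\<chi> i j. Im (A$i$j))"

definition cof :: "real^'c^'r \<Rightarrow> complex^'c^'r" where
  "cof A = (\<chi> i j. complex_of_real (A$i$j))"

definition is_diag :: "'a::zero^'n^'n \<Rightarrow> bool" where
  "is_diag A \<longleftrightarrow> (\<forall>i j. i \<noteq> j \<longrightarrow> A$i$j = 0)"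

definition real_pos_def :: "real^'n^'n \<Rightarrow> bool" where
  "real_pos_def A \<longleftrightarrow> transpose A = A \<and> (\<forall>x. x \<noteq> 0 \<longrightarrow> x \<bullet> (A *v x) > 0)"

definition ZAAp :: "real \<Rightarrow> complex^'m^'m \<Rightarrow> complex^'m^'m" where
  "ZAAp Z0 ZAA = ZAA + mat (complex_of_real Z0)"

definition GammaA :: "real \<Rightarrow> complex^'m^'m \<Rightarrow> complex^'m^'m" where
  "GammaA Z0 ZA = matrix_inv (ZA + mat (complex_of_real Z0)) ** (ZA - mat (complex_of_real Z0))"

definition GammaAt :: "real \<Rightarrow> complex^'m^'m \<Rightarrow> complex^'m^'m" where
  "GammaAt Z0 ZA = GammaA Z0 ZA + mat 1"

text \<open>\<open>Z_A^D = -j Im Z_AA + Z0 R^{1/2} Z_A^{-1} R^{1/2}\<close>, with \<open>Rh\<close> the square root \<open>R^{1/2}\<close>.\<close>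
definition ZAD :: "real \<Rightarrow> complex^'m^'m \<Rightarrow> real^'m^'m \<Rightarrow> complex^'m^'m \<Rightarrow> complex^'m^'m" where
  "ZAD Z0 ZAA Rh ZA = cmsc (- \<i>) (cof (cim ZAA))
      + cmsc (complex_of_real Z0) (cof Rh ** matrix_inv ZA ** cof Rh)"

end

theory Submission
  imports Defs
begin

text \<open>Because \<open>Re Z_AA = R^{1/2} R^{1/2}\<close>, adding \<open>Z_AA\<close> to \<open>Z_A^D\<close> cancels the imaginary part and
  leaves \<open>R^{1/2} (I + Z0 Z_A^{-1}) R^{1/2} = R^{1/2} Z_A^{-1} (Z_A + Z0 I) R^{1/2}\<close>, which is a product
  of invertible matrices.  Its inverse \<open>R^{-1/2} (Z_A + Z0 I)^{-1} Z_A R^{-1/2}\<close> equals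
  \<open>R^{-1/2} tilde Gamma_A R^{-1/2} / 2\<close>, since \<open>tilde Gamma_A = 2 (Z_A + Z0 I)^{-1} Z_A\<close>; substituting
  this into the six channels gives the claimed forms.\<close>

lemma cmsc_matrix_mult_left: "cmsc c A ** B = cmsc c (A ** B)"
  by (simp add: cmsc_def matrix_matrix_mult_def vec_eq_iff sum_distrib_left mult.assoc)

lemma cmsc_matrix_mult_right: "A ** cmsc c B = cmsc c (A ** B)"
  by (simp add: cmsc_def matrix_matrix_mult_def vec_eq_iff sum_distrib_left mult_ac)

lemma cmsc_cmsc: "cmsc a (cmsc b A) = cmsc (a * b) A"
  by (simp add: cmsc_def vec_eq_iff)

lemma cmsc_1 [simp]: "cmsc 1 A = A"
  by (simp add: cmsc_def vec_eq_iff)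

lemma mat_eq_cmsc: "mat c = cmsc c (mat 1)"
  by (simp add: cmsc_def mat_def vec_eq_iff)

lemma add_self_eq_cmsc_2: "A + A = cmsc 2 A"
  by (simp add: cmsc_def vec_eq_iff)

lemma matrix_diff_ldistrib: "(A::'a::ring_1^'n^'m) ** (B - C) = A ** B - A ** C"
  by (simp add: matrix_matrix_mult_def vec_eq_iff sum_subtractf algebra_simps)

lemma matrix_add_rdistrib: "((B::'a::semiring_1^'n^'m) + C) ** A = B ** A + C ** A"
  by (simp add: matrix_matrix_mult_def vec_eq_iff sum.distrib algebra_simps)

lemma cof_matrix_mult: "cof (A ** B) = cof A ** cof B"
  by (simp add: cof_def matrix_matrix_mult_def vec_eq_iff)

lemma cof_mat_1: "cof (mat 1) = mat 1"
  by (simp add: cof_def mat_def vec_eq_iff)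

lemma invertible_cof:
  assumes "invertible A"
  shows "invertible (cof A)"
proof -
  obtain B where "A ** B = mat 1" "B ** A = mat 1"
    using assms by (auto simp: invertible_def)
  then have "cof A ** cof B = mat 1" "cof B ** cof A = mat 1"
    by (simp_all add: cof_matrix_mult[symmetric] cof_mat_1)
  then show ?thesis
    by (auto simp: invertible_def)
qed

lemma invertible_real_pos_def:
  assumes "real_pos_def A"
  shows "invertible A"
proof -
  have "x = 0" if "A *v x = 0" for x
    using assms that unfolding real_pos_def_def by (metis inner_zero_right less_irrefl)
  then show ?thesis
    by (simp add: invertible_left_inverse matrix_left_invertible_ker)
qed

lemma matrix_inv_right:
  assumes "invertible A"
  shows "A ** matrix_inv A = mat 1"
  using someI_ex[of "\<lambda>A'. A ** A' = mat 1 \<and> A' ** A = mat 1"] assms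
  by (simp add: invertible_def matrix_inv_def)

lemma matrix_inv_left:
  assumes "invertible A"
  shows "matrix_inv A ** A = mat 1"
  using someI_ex[of "\<lambda>A'. A ** A' = mat 1 \<and> A' ** A = mat 1"] assms
  by (simp add: invertible_def matrix_inv_def)

lemma matrix_inv_eq_left_inverse:
  fixes A B :: "'a::field^'n^'n"
  assumes "B ** A = mat 1"
  shows "matrix_inv A = B"
proof -
  have "invertible A"
    using assms invertible_left_inverse by blast
  then have "B = B ** (A ** matrix_inv A)"
    by (simp add: matrix_inv_right)
  then show ?thesis
    by (simp add: matrix_mul_assoc assms)
qed

lemma GammaAt_eq:
  assumes "invertible (ZA + mat (complex_of_real Z0))"
  shows "GammaAt Z0 ZA = cmsc 2 (matrix_inv (ZA + mat (complex_of_real Z0)) ** ZA)"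
proof -
  let ?P = "ZA + mat (complex_of_real Z0)"
  have "GammaAt Z0 ZA = matrix_inv ?P ** (ZA - mat (complex_of_real Z0)) + matrix_inv ?P ** ?P"
    using matrix_inv_left[OF assms] by (simp add: GammaAt_def GammaA_def)
  also have "\<dots> = matrix_inv ?P ** (ZA + ZA)"
    by (simp add: matrix_add_ldistrib[symmetric])
  finally show ?thesis
    by (simp add: add_self_eq_cmsc_2 cmsc_matrix_mult_right)
qed

lemma ZAD_add_ZAA:
  "ZAD Z0 ZAA Rh ZA + ZAA
     = cof (cre ZAA) + cmsc (complex_of_real Z0) (cof Rh ** matrix_inv ZA ** cof Rh)"
  by (simp add: ZAD_def cmsc_def cof_def cim_def cre_def vec_eq_iff complex_eq_iff)

lemma ZAD_add_ZAA_factor: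
  assumes "Rh ** Rh = cre ZAA" and "invertible ZA"
  shows "ZAD Z0 ZAA Rh ZA + ZAA
           = cof Rh ** matrix_inv ZA ** (ZA + mat (complex_of_real Z0)) ** cof Rh"
proof -
  have "cof Rh ** matrix_inv ZA ** (ZA + mat (complex_of_real Z0)) ** cof Rh
          = cof Rh ** (mat 1 + cmsc (complex_of_real Z0) (matrix_inv ZA)) ** cof Rh"
    using matrix_inv_left[OF assms(2)]
    by (simp add: matrix_mul_assoc[symmetric] matrix_add_ldistrib cmsc_matrix_mult_right
        mat_eq_cmsc[of "complex_of_real Z0"])
  also have "\<dots> = cof (cre ZAA) + cmsc (complex_of_real Z0) (cof Rh ** matrix_inv ZA ** cof Rh)"
    by (simp add: assms(1)[symmetric] cof_matrix_mult matrix_add_ldistrib matrix_add_rdistrib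
        cmsc_matrix_mult_left cmsc_matrix_mult_right)
  finally show ?thesis
    by (simp add: ZAD_add_ZAA)
qed

lemma inverse_ZAD_add_ZAA:
  assumes "invertible Rh" and "Rh ** Rh = cre ZAA"
    and "invertible ZA" and "invertible (ZA + mat (complex_of_real Z0))"
  shows "invertible (ZAD Z0 ZAA Rh ZA + ZAA)"
    and "matrix_inv (ZAD Z0 ZAA Rh ZA + ZAA)
           = cmsc (1/2) (matrix_inv (cof Rh) ** GammaAt Z0 ZA ** matrix_inv (cof Rh))"
proof -
  let ?Rc = "cof Rh" and ?P = "ZA + mat (complex_of_real Z0)"
  let ?W = "matrix_inv ?Rc ** matrix_inv ?P ** ZA ** matrix_inv ?Rc"
  have Rc_inv: "invertible ?Rc"
    using assms(1) by (rule invertible_cof)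
  have "?W ** (ZAD Z0 ZAA Rh ZA + ZAA)
          = matrix_inv ?Rc ** matrix_inv ?P ** (ZA ** (matrix_inv ?Rc ** ?Rc) ** matrix_inv ZA) ** ?P ** ?Rc"
    by (simp only: ZAD_add_ZAA_factor[OF assms(2,3)] matrix_mul_assoc)
  also have "\<dots> = matrix_inv ?Rc ** (matrix_inv ?P ** ?P) ** ?Rc"
    by (simp add: matrix_inv_left[OF Rc_inv] matrix_inv_right[OF assms(3)] matrix_mul_assoc)
  also have "\<dots> = mat 1"
    by (simp add: matrix_inv_left[OF assms(4)] matrix_inv_left[OF Rc_inv])
  finally have left_inverse: "?W ** (ZAD Z0 ZAA Rh ZA + ZAA) = mat 1" .
  then show "invertible (ZAD Z0 ZAA Rh ZA + ZAA)"
    using invertible_left_inverse by blast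
  show "matrix_inv (ZAD Z0 ZAA Rh ZA + ZAA)
          = cmsc (1/2) (matrix_inv ?Rc ** GammaAt Z0 ZA ** matrix_inv ?Rc)"
    by (simp add: matrix_inv_eq_left_inverse[OF left_inverse] GammaAt_eq[OF assms(4)]
        cmsc_matrix_mult_left cmsc_matrix_mult_right cmsc_cmsc matrix_mul_assoc)
qed

theorem theorem2:
  fixes Z0 :: real
    and ZAA ZA :: "complex^'m^'m"
    and Rh :: "real^'m^'m"
    and ZBU :: "complex^'n^1" and ZRU :: "complex^'m^1" and ZBR :: "complex^'n^'m"
    and ZJU :: "complex^'j^1" and ZJR :: "complex^'j^'m"
  assumes Z0_pos: "Z0 > 0"
    and ZAA_sym: "transpose ZAA = ZAA"
    and R_pd: "real_pos_def (cre ZAA)"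
    and Rh_sqrt: "real_pos_def Rh" "Rh ** Rh = cre ZAA"
    and ZA_diag: "is_diag ZA"
    and ZA_inv: "invertible ZA"
    and ZA_Z0_inv: "invertible (ZA + mat (complex_of_real Z0))"
  shows "invertible (ZAD Z0 ZAA Rh ZA + ZAA) \<and>
    (let W = matrix_inv (ZAD Z0 ZAA Rh ZA + ZAA);
         c = complex_of_real (1 / (2 * Z0));
         Rmh = matrix_inv (cof Rh);
         G = GammaAt Z0 ZA;
         ZAAP = ZAAp Z0 ZAA;
         tZRU = ZRU ** Rmh; tZBR = Rmh ** ZBR; tZJR = Rmh ** ZJR;
         bZAA = Rmh ** ZAAP; tZAA = ZAAP ** Rmh
     in cmsc c (ZBU - ZRU ** W ** ZBR) = cmsc c (ZBU - cmsc (1/2) (tZRU ** G ** tZBR))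
      \<and> cmsc c (ZJU - ZRU ** W ** ZJR) = cmsc c (ZJU - cmsc (1/2) (tZRU ** G ** tZJR))
      \<and> cmsc c (ZRU ** (mat 1 - W ** ZAAP)) = cmsc c (ZRU - cmsc (1/2) (tZRU ** G ** bZAA))
      \<and> cmsc c (ZBR - ZAAP ** W ** ZBR) = cmsc c (ZBR - cmsc (1/2) (tZAA ** G ** tZBR))
      \<and> cmsc c (ZJR - ZAAP ** W ** ZJR) = cmsc c (ZJR - cmsc (1/2) (tZAA ** G ** tZJR))
      \<and> cmsc c (ZAAP - ZAAP ** W ** ZAAP) = cmsc c (ZAAP - cmsc (1/2) (tZAA ** G ** bZAA)))"
proof -
  note W_facts = inverse_ZAD_add_ZAA[OF invertible_real_pos_def[OF Rh_sqrt(1)] Rh_sqrt(2)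
      ZA_inv ZA_Z0_inv]
  show ?thesis
    unfolding Let_def
    by (simp add: W_facts matrix_diff_ldistrib cmsc_matrix_mult_left cmsc_matrix_mult_right
        matrix_mul_assoc)
qed

end
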